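(* Let $F$ be a Sturmian set on an alphabet with $k$ letters and let $X\subset F$ be a finite $F$-maximal bifix code of $F$-degree $d$. Let $P$ (resp. $S$) be the set of proper prefixes (resp. proper suffixes) of words of $X$, including the empty word. Then $\sum_{x\in X}|x|=\mathrm{Card}(P)+\mathrm{Card}(S)+(k-2)d$.
   Context: A word $u\in F$ is right-special if $ua\in F$ for at least two letters $a$. An infinite word $x$ is strict episturmian if its set of factors $F(x)$ is closed under reversal, has exactly one right-special word of each length, and each right-special factor $u$ has $ua\in F(x)$ for every letter $a$; a Sturmian set is the set of factors of a strict episturmian word. A bifix code is a set of nonempty words none of which is a proper prefix or proper suffix of another; $X\subset F$ is $F$-maximal bifix if not properly contained in a bifix code contained in $F$. A parse of $w$ with respect to $X$ is a triple $(v,x,u)$ with $w=vxu$, $v$ having no suffix in $X$, $x\in X^*$, $u$ having no prefix in $X$; $d_F(X)$ is the maximum over $w\in F$ of the number of parses. *)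

theory Defs
  imports Main "HOL-Library.Sublist"
begin

definition factors :: "(nat \<Rightarrow> 'a) \<Rightarrow> 'a list set" where
  "factors x = {w. \<exists>i. w = map x [i..<i + length w]}"

definition right_special :: "'a list set \<Rightarrow> 'a list \<Rightarrow> bool" where
  "right_special F u \<longleftrightarrow> (\<exists>a b. a \<noteq> b \<and> u @ [a] \<in> F \<and> u @ [b] \<in> F)"

definition strict_episturmian :: "'a set \<Rightarrow> (nat \<Rightarrow> 'a) \<Rightarrow> bool" where
  "strict_episturmian A x \<longleftrightarrow>
     (\<forall>i. x i \<in> A) \<and>
     (\<forall>w \<in> factors x. rev w \<in> factors x) \<and>
     (\<forall>n. \<exists>!u. length u = n \<and> right_special (factors x) u) \<and>
     (\<forall>u. right_special (factors x) u \<longrightarrow> (\<forall>a\<in>A. u @ [a] \<in> factors x))"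

definition sturmian_set :: "'a set \<Rightarrow> 'a list set \<Rightarrow> bool" where
  "sturmian_set A F \<longleftrightarrow> (\<exists>x. strict_episturmian A x \<and> F = factors x)"

definition bifix_code :: "'a list set \<Rightarrow> bool" where
  "bifix_code X \<longleftrightarrow> [] \<notin> X \<and>
     (\<forall>u\<in>X. \<forall>v\<in>X. \<not> strict_prefix u v \<and> \<not> strict_suffix u v)"

definition F_maximal_bifix :: "'a list set \<Rightarrow> 'a list set \<Rightarrow> bool" where
  "F_maximal_bifix F X \<longleftrightarrow> bifix_code X \<and> X \<subseteq> F \<and>
     \<not> (\<exists>Y. bifix_code Y \<and> Y \<subseteq> F \<and> X \<subset> Y)"

definition star :: "'a list set \<Rightarrow> 'a list set" where
  "star X = {w. \<exists>xs. set xs \<subseteq> X \<and> w = concat xs}"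

definition parses :: "'a list set \<Rightarrow> 'a list \<Rightarrow> ('a list \<times> 'a list \<times> 'a list) set" where
  "parses X w = {(v, y, u). w = v @ y @ u \<and>
      (\<forall>s. suffix s v \<longrightarrow> s \<notin> X) \<and> y \<in> star X \<and> (\<forall>p. prefix p u \<longrightarrow> p \<notin> X)}"

definition has_F_degree :: "'a list set \<Rightarrow> 'a list set \<Rightarrow> nat \<Rightarrow> bool" where
  "has_F_degree F X d \<longleftrightarrow> (\<forall>w\<in>F. card (parses X w) \<le> d) \<and> (\<exists>w\<in>F. card (parses X w) = d)"

definition proper_prefixes :: "'a list set \<Rightarrow> 'a list set" where
  "proper_prefixes X = {p. \<exists>x\<in>X. strict_prefix p x}"

definition proper_suffixes :: "'a list set \<Rightarrow> 'a list set" where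
  "proper_suffixes X = {s. \<exists>x\<in>X. strict_suffix s x}"

end

theory Submission
  imports Defs
begin

text \<open>
  The number of parses of a word \<open>w\<close> equals the number of its suffixes having no prefix
  in \<open>X\<close>; from this, the parse count grows by one exactly when a letter is appended
  that creates no suffix in \<open>X\<close>.  Since a Sturmian set is recurrent and some factor has
  \<open>d\<close> parses, the proper prefixes (suffixes) of \<open>X\<close> are exactly the factors without
  prefix (suffix) in \<open>X\<close>, and every factor longer than all code words has \<open>d\<close> parses.

  Let \<open>J\<close> be the set of lengths \<open>j\<close> for which the right special factor of length \<open>j\<close> is
  a proper prefix; then \<open>card J = d\<close>.  Counting one-letter extensions in the prefix tree
  gives \<open>\<Sum>x\<in>X. |x| = card P + (k - 1) \<Sum>j\<in>J. (j + 1)\<close>, and summing the parse counts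
  over all factors of each length gives \<open>card S = d + (k - 1) \<Sum>j\<in>J. j\<close>.
\<close>

section \<open>Parses with respect to a bifix code\<close>

definition no_prefix_in :: "'a list set \<Rightarrow> 'a list \<Rightarrow> bool" where
  "no_prefix_in X u \<longleftrightarrow> (\<forall>p. prefix p u \<longrightarrow> p \<notin> X)"

definition no_suffix_in :: "'a list set \<Rightarrow> 'a list \<Rightarrow> bool" where
  "no_suffix_in X v \<longleftrightarrow> (\<forall>s. suffix s v \<longrightarrow> s \<notin> X)"

text \<open>The suffixes of \<open>w\<close> having no prefix in \<open>X\<close>: these are exactly the last components
  of the parses of \<open>w\<close>, and their number is the number of parses.\<close>

definition free_suffixes :: "'a list set \<Rightarrow> 'a list \<Rightarrow> 'a list set" where
  "free_suffixes X w = {u. suffix u w \<and> no_prefix_in X u}"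

definition parse_count :: "'a list set \<Rightarrow> 'a list \<Rightarrow> nat" where
  "parse_count X w = card (free_suffixes X w)"

lemma finite_free_suffixes: "finite (free_suffixes X w)"
  by (rule finite_subset[of _ "set (suffixes w)"]) (auto simp: free_suffixes_def)

lemma bifix_code_Nil: "bifix_code X \<Longrightarrow> [] \<notin> X"
  unfolding bifix_code_def by blast

lemma bifix_code_suffix_eq:
  assumes "bifix_code X" "u \<in> X" "v \<in> X" "suffix u v" shows "u = v"
  using assms unfolding bifix_code_def strict_suffix_def by blast

lemma star_snoc:
  assumes "y \<in> star X" "s \<in> X" shows "y @ s \<in> star X"
proof -
  obtain xs where "set xs \<subseteq> X" "y = concat xs" using assms(1) unfolding star_def by blast
  with assms(2) show ?thesis unfolding star_def by (intro CollectI exI[of _ "xs @ [s]"]) simp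
qed

text \<open>Every word factors as \<open>v y\<close> with \<open>y \<in> X\<^sup>*\<close> and \<open>v\<close> without suffix in \<open>X\<close>:
  strip elements of \<open>X\<close> from the right as long as possible.\<close>

lemma right_decomposition_exists:
  assumes "[] \<notin> X"
  shows "\<exists>v y. t = v @ y \<and> y \<in> star X \<and> no_suffix_in X v"
proof (induction "length t" arbitrary: t rule: less_induct)
  case less
  show ?case
  proof (cases "no_suffix_in X t")
    case True
    have "[] \<in> star X" unfolding star_def by (auto intro!: exI[of _ "[]"])
    with True show ?thesis by auto
  next
    case False
    then obtain t' s where t: "t = t' @ s" and s: "s \<in> X"
      unfolding no_suffix_in_def suffix_def by blast
    with assms have "length t' < length t" by (cases s) auto
    with less obtain v y where "t' = v @ y" "y \<in> star X" "no_suffix_in X v" by blast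
    with t s star_snoc show ?thesis by fastforce
  qed
qed

text \<open>For a suffix code this decomposition is unique: the last factors from \<open>X\<close> must agree,
  and the remaining \<open>v\<close> cannot end with a factor from \<open>X\<close>.\<close>

lemma right_decomposition_unique_concat:
  assumes X: "bifix_code X"
  shows "set xs \<subseteq> X \<Longrightarrow> set xs' \<subseteq> X \<Longrightarrow> v @ concat xs = v' @ concat xs' \<Longrightarrow>
    no_suffix_in X v \<Longrightarrow> no_suffix_in X v' \<Longrightarrow> v = v' \<and> concat xs = concat xs'"
proof (induction xs arbitrary: xs' v v' rule: rev_induct)
  case Nil
  show ?case
  proof (cases xs' rule: rev_exhaust)
    case (snoc ys s')
    with Nil.prems have "suffix s' v" "s' \<in> X" by (auto simp: suffix_def)
    with Nil.prems(4) show ?thesis unfolding no_suffix_in_def by blast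
  qed (use Nil.prems in simp)
next
  case (snoc s xs)
  show ?case
  proof (cases xs' rule: rev_exhaust)
    case Nil
    with snoc.prems have "suffix s v'" "s \<in> X" by (auto simp: suffix_def)
    with snoc.prems(5) show ?thesis unfolding no_suffix_in_def by blast
  next
    case (snoc ys s')
    have eq: "(v @ concat xs) @ s = (v' @ concat ys) @ s'"
      using snoc.prems(3) \<open>xs' = ys @ [s']\<close> by simp
    then have "suffix s s' \<or> suffix s' s"
      by (intro suffix_same_cases[of _ "(v' @ concat ys) @ s'"]) (metis suffixI)+
    then have "s = s'"
      using bifix_code_suffix_eq[OF X] snoc.prems(1,2) \<open>xs' = ys @ [s']\<close> by auto
    with eq snoc.IH[of ys v v'] snoc.prems \<open>xs' = ys @ [s']\<close> show ?thesis by auto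
  qed
qed

lemma right_decomposition_unique:
  assumes "bifix_code X" "v @ y = v' @ y'" "y \<in> star X" "y' \<in> star X"
    "no_suffix_in X v" "no_suffix_in X v'"
  shows "v = v' \<and> y = y'"
  using assms right_decomposition_unique_concat[OF assms(1)] unfolding star_def by blast

text \<open>Hence a parse \<open>(v, y, u)\<close> is determined by its last component \<open>u\<close>, which can be
  any suffix without prefix in \<open>X\<close>.\<close>

lemma card_parses:
  assumes X: "bifix_code X"
  shows "card (parses X w) = parse_count X w"
  unfolding parse_count_def
proof (rule bij_betw_same_card[of "\<lambda>(v, y, u). u"], rule bij_betwI')
  fix a b assume "a \<in> parses X w" "b \<in> parses X w"
  then obtain v y u v' y' u' where
    a: "a = (v, y, u)" "w = v @ y @ u" "no_suffix_in X v" "y \<in> star X" and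
    b: "b = (v', y', u')" "w = v' @ y' @ u'" "no_suffix_in X v'" "y' \<in> star X"
    unfolding parses_def no_suffix_in_def by auto
  show "((\<lambda>(v, y, u). u) a = (\<lambda>(v, y, u). u) b) = (a = b)"
  proof
    assume "(\<lambda>(v, y, u). u) a = (\<lambda>(v, y, u). u) b"
    with a b have "u = u'" "v @ y = v' @ y'" by simp_all
    with a b right_decomposition_unique[OF X] show "a = b" by blast
  qed simp
next
  fix a assume "a \<in> parses X w"
  then show "(\<lambda>(v, y, u). u) a \<in> free_suffixes X w"
    unfolding parses_def free_suffixes_def no_prefix_in_def suffix_def by auto
next
  fix u assume "u \<in> free_suffixes X w"
  then obtain t where t: "w = t @ u" "no_prefix_in X u"
    unfolding free_suffixes_def suffix_def by auto
  obtain v y where "t = v @ y" "y \<in> star X" "no_suffix_in X v"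
    using right_decomposition_exists[OF bifix_code_Nil[OF X]] by blast
  with t have "(v, y, u) \<in> parses X w"
    unfolding parses_def no_suffix_in_def no_prefix_in_def by auto
  then show "\<exists>a\<in>parses X w. u = (\<lambda>(v, y, u). u) a" by force
qed

text \<open>Appending a letter: the free suffixes of \<open>w a\<close> are \<open>[]\<close> and the words \<open>u a\<close> with
  \<open>u\<close> a free suffix of \<open>w\<close> and \<open>u a \<notin> X\<close>; by the bifix property at most one free suffix
  \<open>u\<close> of \<open>w\<close> has \<open>u a \<in> X\<close>, and one exists iff \<open>w a\<close> has a suffix in \<open>X\<close>.\<close>

lemma parse_count_snoc:
  assumes X: "bifix_code X"
  shows "parse_count X (w @ [a]) = parse_count X w + (if no_suffix_in X (w @ [a]) then 1 else 0)"
proof -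
  define B where "B = {u \<in> free_suffixes X w. u @ [a] \<notin> X}"
  define D where "D = {u \<in> free_suffixes X w. u @ [a] \<in> X}"
  have fin: "finite B" "finite D"
    unfolding B_def D_def by (rule finite_subset[OF _ finite_free_suffixes], blast)+
  have snoc_eq: "free_suffixes X (w @ [a]) = insert [] ((\<lambda>u. u @ [a]) ` B)"
    using bifix_code_Nil[OF X]
    by (auto simp: B_def free_suffixes_def no_prefix_in_def)
  then have snoc: "parse_count X (w @ [a]) = Suc (card B)"
    unfolding parse_count_def snoc_eq using fin
    by (subst card_insert_disjoint) (auto simp: card_image inj_on_def)
  have "free_suffixes X w = B \<union> D" "B \<inter> D = {}" unfolding B_def D_def by auto
  then have split: "parse_count X w = card B + card D"
    unfolding parse_count_def using card_Un_disjoint[OF fin] by simp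
  have "card D = (if no_suffix_in X (w @ [a]) then 0 else 1)"
  proof (cases "no_suffix_in X (w @ [a])")
    case True
    then have "D = {}" unfolding D_def no_suffix_in_def free_suffixes_def by auto
    with True show ?thesis by simp
  next
    case False
    then obtain s where s: "suffix s (w @ [a])" "s \<in> X" unfolding no_suffix_in_def by blast
    with bifix_code_Nil[OF X] obtain u0 where u0: "s = u0 @ [a]" "suffix u0 w" by auto
    have "no_prefix_in X u0"
    proof (unfold no_prefix_in_def, intro allI impI)
      fix p assume "prefix p u0"
      then have "strict_prefix p s" using u0 by (auto simp: strict_prefix_def prefix_def)
      then show "p \<notin> X" using X s(2) unfolding bifix_code_def by blast
    qed
    have "D = {u0}"
    proof
      show "{u0} \<subseteq> D" using u0 s \<open>no_prefix_in X u0\<close> unfolding D_def free_suffixes_def by auto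
      show "D \<subseteq> {u0}"
      proof
        fix u assume "u \<in> D"
        then have u: "suffix u w" "u @ [a] \<in> X" unfolding D_def free_suffixes_def by auto
        then have "suffix (u @ [a]) s \<or> suffix s (u @ [a])"
          using s(1) by (intro suffix_same_cases[of _ "w @ [a]"]) auto
        with u s u0 show "u \<in> {u0}" using bifix_code_suffix_eq[OF X] by blast
      qed
    qed
    with False show ?thesis by simp
  qed
  with snoc split show ?thesis by simp
qed

lemma parse_count_mono_append:
  assumes "bifix_code X" shows "parse_count X w \<le> parse_count X (w @ z)"
proof (induction z rule: rev_induct)
  case (snoc a z)
  then show ?case using parse_count_snoc[OF assms, of "w @ z" a] by simp
qed simp

lemma parse_count_mono_prepend: "parse_count X v \<le> parse_count X (z @ v)"
  unfolding parse_count_def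
  by (rule card_mono[OF finite_free_suffixes]) (auto simp: free_suffixes_def intro: suffix_appendI)

lemma parse_count_append_strict:
  assumes "bifix_code X" "w \<noteq> []" "no_suffix_in X (z @ w)"
  shows "parse_count X z < parse_count X (z @ w)"
proof -
  obtain w' a where w: "w = w' @ [a]" using assms(2) by (cases w rule: rev_exhaust) auto
  have "parse_count X z \<le> parse_count X (z @ w')" by (rule parse_count_mono_append[OF assms(1)])
  also have "\<dots> < parse_count X ((z @ w') @ [a])"
    using parse_count_snoc[OF assms(1), of "z @ w'" a] assms(3) w by simp
  finally show ?thesis using w by simp
qed

lemma parse_count_prepend_strict:
  assumes "z \<noteq> []" "no_prefix_in X (z @ v)"
  shows "parse_count X v < parse_count X (z @ v)"
proof -
  have "insert (z @ v) (free_suffixes X v) \<subseteq> free_suffixes X (z @ v)"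
    using assms(2) by (auto simp: free_suffixes_def intro: suffix_appendI)
  moreover have "z @ v \<notin> free_suffixes X v"
    using assms(1) by (auto simp: free_suffixes_def dest: suffix_length_le)
  ultimately have "Suc (card (free_suffixes X v)) \<le> card (free_suffixes X (z @ v))"
    using card_mono[OF finite_free_suffixes] card_insert_disjoint[OF finite_free_suffixes] by metis
  then show ?thesis unfolding parse_count_def by simp
qed

section \<open>Factors of infinite words\<close>

text \<open>Occurrences of a finite word \<open>w\<close> at position \<open>i\<close> of an infinite word \<open>x\<close>; they make
  the closure of factor sets under taking factors and concatenating adjacent occurrences easy.\<close>

definition occurs_at :: "(nat \<Rightarrow> 'a) \<Rightarrow> nat \<Rightarrow> 'a list \<Rightarrow> bool" where
  "occurs_at x i w \<longleftrightarrow> (\<forall>t<length w. x (i + t) = w ! t)"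

lemma factors_iff_occurs: "w \<in> factors x \<longleftrightarrow> (\<exists>i. occurs_at x i w)"
proof
  assume "w \<in> factors x"
  then obtain i where "w = map x [i..<i + length w]" unfolding factors_def by auto
  then have "occurs_at x i w"
    unfolding occurs_at_def by (metis add_diff_cancel_left' length_map length_upt nth_map_upt)
  then show "\<exists>i. occurs_at x i w" ..
next
  assume "\<exists>i. occurs_at x i w"
  then obtain i where "occurs_at x i w" ..
  then have "w = map x [i..<i + length w]" unfolding occurs_at_def by (intro nth_equalityI) auto
  then show "w \<in> factors x" unfolding factors_def by auto
qed

lemma occurs_at_append:
  "occurs_at x i (u @ v) \<longleftrightarrow> occurs_at x i u \<and> occurs_at x (i + length u) v"
proof
  assume uv: "occurs_at x i (u @ v)"
  have "x (i + t) = u ! t" if "t < length u" for t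
    using uv that unfolding occurs_at_def by (auto simp: nth_append dest: spec[of _ t])
  moreover have "x (i + length u + t) = v ! t" if "t < length v" for t
    using uv that unfolding occurs_at_def
    by (auto simp: nth_append add.assoc dest: spec[of _ "length u + t"])
  ultimately show "occurs_at x i u \<and> occurs_at x (i + length u) v"
    unfolding occurs_at_def by blast
next
  assume "occurs_at x i u \<and> occurs_at x (i + length u) v"
  then have u: "\<forall>t<length u. x (i + t) = u ! t"
    and v: "\<forall>t<length v. x (i + length u + t) = v ! t" unfolding occurs_at_def by auto
  show "occurs_at x i (u @ v)" unfolding occurs_at_def
  proof (intro allI impI)
    fix t assume t: "t < length (u @ v)"
    show "x (i + t) = (u @ v) ! t"
    proof (cases "t < length u")
      case False
      with t v[rule_format, of "t - length u"] show ?thesis by (simp add: nth_append)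
    qed (use u in \<open>simp add: nth_append\<close>)
  qed
qed

lemma occurs_at_map: "occurs_at x i (map x [i..<i + n])"
  unfolding occurs_at_def by simp

lemma factors_infix: "u @ w @ v \<in> factors x \<Longrightarrow> w \<in> factors x"
  by (auto simp: factors_iff_occurs occurs_at_append)

lemma factors_prefix: "w @ v \<in> factors x \<Longrightarrow> w \<in> factors x"
  using factors_infix[of "[]" w v x] by simp

lemma factors_suffix: "u @ w \<in> factors x \<Longrightarrow> w \<in> factors x"
  using factors_infix[of u w "[]" x] by simp

lemma factors_Nil: "[] \<in> factors x"
  by (auto simp: factors_iff_occurs occurs_at_def)

text \<open>If the factors of \<open>x\<close> are closed under reversal, every factor occurs arbitrarily far
  to the right: a long prefix \<open>q'\<close> of \<open>x\<close> occurs reversed somewhere, and inside that reversed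
  occurrence sits, beyond position \<open>m\<close>, a reversed copy of a reversed occurrence of \<open>w\<close>.\<close>

lemma reversal_closed_late_occurrence:
  assumes rev_closed: "\<forall>w \<in> factors x. rev w \<in> factors x" and w: "w \<in> factors x"
  shows "\<exists>i\<ge>m. occurs_at x i w"
proof -
  obtain i0 where o0: "occurs_at x i0 w" using w by (auto simp: factors_iff_occurs)
  define q where "q = map x [0..<i0 + length w]"
  have "q \<in> factors x" unfolding factors_iff_occurs q_def using occurs_at_map[of x 0] by auto
  with rev_closed have "rev q \<in> factors x" by blast
  then obtain j where oj: "occurs_at x j (rev q)" by (auto simp: factors_iff_occurs)
  define K where "K = j + length q + m"
  define q' where "q' = map x [0..<K]"
  have "q' \<in> factors x" unfolding factors_iff_occurs q'_def using occurs_at_map[of x 0] by auto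
  with rev_closed have "rev q' \<in> factors x" by blast
  then obtain j' where oj': "occurs_at x j' (rev q')" by (auto simp: factors_iff_occurs)
  have lq: "length q = i0 + length w" unfolding q_def by simp
  have "occurs_at x (j' + m + i0) w"
  proof (unfold occurs_at_def, intro allI impI)
    fix s assume s: "s < length w"
    have "x (j' + m + i0 + s) = rev q' ! (m + i0 + s)"
      using oj' s lq unfolding occurs_at_def q'_def K_def by (simp add: add.assoc)
    also have "\<dots> = x (K - Suc (m + i0 + s))"
      using s lq unfolding q'_def K_def by (simp add: rev_nth)
    also have "K - Suc (m + i0 + s) = j + (length q - Suc (i0 + s))"
      unfolding K_def using s lq by simp
    also have "x (j + (length q - Suc (i0 + s))) = rev q ! (length q - Suc (i0 + s))"
    proof -
      have "length q - Suc (i0 + s) < length (rev q)" using s lq by simp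
      then show ?thesis using oj unfolding occurs_at_def by blast
    qed
    also have "\<dots> = q ! (i0 + s)" using s lq by (simp add: rev_nth)
    also have "\<dots> = x (i0 + s)" using s unfolding q_def by simp
    also have "\<dots> = w ! s" using o0 s unfolding occurs_at_def by simp
    finally show "x (j' + m + i0 + s) = w ! s" .
  qed
  then show ?thesis by (intro exI[of _ "j' + m + i0"]) simp
qed

lemma reversal_closed_recurrent:
  assumes rev_closed: "\<forall>w \<in> factors x. rev w \<in> factors x"
    and u: "u \<in> factors x" and v: "v \<in> factors x"
  shows "\<exists>t. u @ t @ v \<in> factors x"
proof -
  obtain i where oi: "occurs_at x i u" using u by (auto simp: factors_iff_occurs)
  obtain j where j: "j \<ge> i + length u" "occurs_at x j v"
    using reversal_closed_late_occurrence[OF rev_closed v] by blast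
  define t where "t = map x [i + length u..<j]"
  have "occurs_at x (i + length u) t"
    using occurs_at_map[of x "i + length u" "j - (i + length u)"] j(1) unfolding t_def by simp
  moreover have "i + length u + length t = j" using j(1) unfolding t_def by simp
  ultimately have "occurs_at x i (u @ t @ v)" using oi j(2) by (simp add: occurs_at_append add.assoc)
  then show ?thesis by (auto simp: factors_iff_occurs)
qed

section \<open>Strict episturmian words\<close>

locale strict_episturmian_word =
  fixes A :: "'a set" and x :: "nat \<Rightarrow> 'a"
  assumes finite_alphabet: "finite A" and episturmian: "strict_episturmian A x"
begin

abbreviation F :: "'a list set" where "F \<equiv> factors x"

lemma letters_in_alphabet: "x i \<in> A"
  using episturmian unfolding strict_episturmian_def by blast

lemma rev_closed: "\<forall>w \<in> F. rev w \<in> F"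
  using episturmian unfolding strict_episturmian_def by blast

lemma recurrent: "u \<in> F \<Longrightarrow> v \<in> F \<Longrightarrow> \<exists>t. u @ t @ v \<in> F"
  by (rule reversal_closed_recurrent[OF rev_closed])

lemma unique_right_special: "\<exists>!u. length u = n \<and> right_special F u"
  using episturmian unfolding strict_episturmian_def by blast

lemma right_special_all_letters: "right_special F u \<Longrightarrow> a \<in> A \<Longrightarrow> u @ [a] \<in> F"
  using episturmian unfolding strict_episturmian_def by blast

definition special :: "nat \<Rightarrow> 'a list" where
  "special n = (THE u. length u = n \<and> right_special F u)"

lemma length_special: "length (special n) = n"
  and special_right_special: "right_special F (special n)"
  using theI'[OF unique_right_special[of n]] unfolding special_def by auto

lemma special_unique: "right_special F u \<Longrightarrow> u = special (length u)"
  using unique_right_special[of "length u"] length_special special_right_special by blast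

lemma inj_special: "inj special"
  by (rule inj_onI) (metis length_special)

lemma special_in_factors: "special n \<in> F"
  using special_right_special[of n] factors_prefix unfolding right_special_def by blast

lemma suffix_special: "suffix u (special m) \<Longrightarrow> u = special (length u)"
  using special_right_special[of m] special_unique factors_suffix
  unfolding right_special_def suffix_def by (metis append_assoc)

lemma special_suffix: "j \<le> m \<Longrightarrow> suffix (special j) (special m)"
  using suffix_special[OF suffix_drop[of "m - j" "special m"]] length_special[of m]
  by (metis diff_diff_cancel length_drop suffix_drop)

definition extensions :: "'a list \<Rightarrow> 'a set" where
  "extensions w = {a. w @ [a] \<in> F}"

lemma extensions_alphabet: "extensions w \<subseteq> A"
proof
  fix a assume "a \<in> extensions w"
  then obtain i where "occurs_at x i (w @ [a])"
    unfolding extensions_def by (auto simp: factors_iff_occurs)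
  then have "x (i + length w) = a"
    unfolding occurs_at_def by (metis length_append_singleton lessI nth_append_length)
  then show "a \<in> A" using letters_in_alphabet by metis
qed

lemma finite_extensions: "finite (extensions w)"
  using extensions_alphabet finite_alphabet finite_subset by blast

lemma extensions_nonempty: "w \<in> F \<Longrightarrow> extensions w \<noteq> {}"
proof -
  assume "w \<in> F"
  then obtain i where "occurs_at x i w" by (auto simp: factors_iff_occurs)
  then have "occurs_at x i (w @ [x (i + length w)])"
    by (simp add: occurs_at_append) (simp add: occurs_at_def)
  then show "extensions w \<noteq> {}" unfolding extensions_def by (auto simp: factors_iff_occurs)
qed

lemma card_extensions:
  assumes "w \<in> F"
  shows "card (extensions w) = (if w = special (length w) then card A else 1)"
proof (cases "w = special (length w)")
  case True
  have "A \<subseteq> extensions w"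
  proof
    fix a assume "a \<in> A"
    then have "special (length w) @ [a] \<in> F"
      by (rule right_special_all_letters[OF special_right_special])
    with True show "a \<in> extensions w" unfolding extensions_def by simp
  qed
  with extensions_alphabet have "extensions w = A" by blast
  with True show ?thesis by simp
next
  case False
  then have "\<not> right_special F w" using special_unique by blast
  then have "\<forall>a\<in>extensions w. \<forall>b\<in>extensions w. a = b"
    unfolding right_special_def extensions_def by blast
  moreover obtain a where "a \<in> extensions w" using extensions_nonempty[OF assms] by blast
  ultimately have "extensions w = {a}" by blast
  with False show ?thesis by simp
qed

definition factors_of_length :: "nat \<Rightarrow> 'a list set" where
  "factors_of_length n = {w \<in> F. length w = n}"

lemma factors_in_alphabet: "w \<in> F \<Longrightarrow> set w \<subseteq> A"
proof
  fix a assume "w \<in> F" "a \<in> set w"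
  then obtain i t where "occurs_at x i w" "t < length w" "w ! t = a"
    by (auto simp: factors_iff_occurs in_set_conv_nth)
  then show "a \<in> A" using letters_in_alphabet unfolding occurs_at_def by metis
qed

lemma finite_factors_of_length: "finite (factors_of_length n)"
  by (rule finite_subset[OF _ finite_lists_length_eq[OF finite_alphabet, of n]])
    (use factors_in_alphabet in \<open>auto simp: factors_of_length_def\<close>)

lemma factors_of_length_Suc:
  "factors_of_length (Suc n) = (\<lambda>(w, a). w @ [a]) ` (SIGMA w:factors_of_length n. extensions w)"
proof (rule set_eqI, rule iffI)
  fix v assume "v \<in> factors_of_length (Suc n)"
  then have v: "v \<in> F" "length v = Suc n" unfolding factors_of_length_def by auto
  then obtain w a where wa: "v = w @ [a]" by (cases v rule: rev_exhaust) auto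
  with v factors_prefix[of w "[a]"] have "w \<in> factors_of_length n" "a \<in> extensions w"
    unfolding factors_of_length_def extensions_def by auto
  with wa show "v \<in> (\<lambda>(w, a). w @ [a]) ` (SIGMA w:factors_of_length n. extensions w)" by force
qed (auto simp: factors_of_length_def extensions_def)

lemma sum_factors_of_length_Suc:
  "(\<Sum>v\<in>factors_of_length (Suc n). f v) = (\<Sum>w\<in>factors_of_length n. \<Sum>a\<in>extensions w. f (w @ [a]))"
proof -
  have "inj_on (\<lambda>(w, a). w @ [a]) (SIGMA w:factors_of_length n. extensions w)"
    by (auto intro!: inj_onI)
  then have "(\<Sum>v\<in>factors_of_length (Suc n). f v)
      = (\<Sum>(w, a)\<in>(SIGMA w:factors_of_length n. extensions w). f (w @ [a]))"
    unfolding factors_of_length_Suc by (simp add: sum.reindex case_prod_unfold)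
  also have "\<dots> = (\<Sum>w\<in>factors_of_length n. \<Sum>a\<in>extensions w. f (w @ [a]))"
    by (rule sum.Sigma[symmetric]) (auto simp: finite_factors_of_length finite_extensions)
  finally show ?thesis .
qed

end

lemma card_by_length:
  assumes "finite B" "\<forall>b\<in>B. length b < N"
  shows "card B = (\<Sum>n<N. card {b\<in>B. length b = n})"
proof -
  have "card B = (\<Sum>b\<in>B. 1)" by simp
  also have "\<dots> = (\<Sum>n<N. \<Sum>b\<in>{b\<in>B. length b = n}. 1)"
    by (rule sum.group[symmetric]) (use assms in auto)
  finally show ?thesis by simp
qed

text \<open>Summing over \<open>n < N\<close> the number of elements of \<open>J\<close> above \<open>n\<close> counts each
  \<open>j \<in> J\<close> exactly \<open>j\<close> times.\<close>

lemma sum_card_greater: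
  assumes "finite J" "\<forall>j\<in>J. j < N"
  shows "(\<Sum>n<N. card {j\<in>J. n < j}) = (\<Sum>j\<in>J. j)"
proof -
  have "(\<Sum>n<N. card {j\<in>J. n < j}) = (\<Sum>n<N. \<Sum>j\<in>J. if n < j then 1 else 0)"
    using sum.inter_filter[OF assms(1), of "\<lambda>_. 1::nat"] by simp
  also have "\<dots> = (\<Sum>j\<in>J. \<Sum>n<N. if n < j then 1 else 0)" by (rule sum.swap)
  also have "\<dots> = (\<Sum>j\<in>J. j)"
  proof (rule sum.cong[OF refl])
    fix j assume "j \<in> J"
    then have "{n\<in>{..<N}. n < j} = {..<j}" using assms(2) by auto
    then show "(\<Sum>n<N. if n < j then 1 else 0) = j"
      using sum.inter_filter[of "{..<N}" "\<lambda>_. 1::nat" "\<lambda>n. n < j"] by simp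
  qed
  finally show ?thesis .
qed

section \<open>A finite bifix code of finite degree in a Sturmian set\<close>

text \<open>Maximality of the code is only used to rule out the empty code.\<close>

locale bifix_code_in_sturmian = strict_episturmian_word +
  fixes X :: "'a list set" and d :: nat
  assumes finite_code: "finite X" and bifix: "bifix_code X" and code_in_factors: "X \<subseteq> F"
    and code_nonempty: "X \<noteq> {}" and degree: "has_F_degree F X d"
begin

abbreviation P :: "'a list set" where "P \<equiv> proper_prefixes X"
abbreviation S :: "'a list set" where "S \<equiv> proper_suffixes X"

lemma parse_count_le_degree: "w \<in> F \<Longrightarrow> parse_count X w \<le> d"
  using degree card_parses[OF bifix] unfolding has_F_degree_def by metis

lemma degree_attained: "\<exists>w0\<in>F. parse_count X w0 = d"
  using degree card_parses[OF bifix] unfolding has_F_degree_def by metis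

lemma Nil_proper_prefix: "[] \<in> P" and Nil_proper_suffix: "[] \<in> S"
proof -
  obtain x0 where "x0 \<in> X" using code_nonempty by blast
  moreover have "x0 \<noteq> []" using calculation bifix_code_Nil[OF bifix] by auto
  ultimately show "[] \<in> P" "[] \<in> S"
    unfolding proper_prefixes_def proper_suffixes_def
    by (auto simp: strict_prefix_def strict_suffix_def)
qed

text \<open>Completeness: a factor without prefix in \<open>X\<close> is a proper prefix of a code word.
  Otherwise, by recurrence, it could be placed in front of a factor with \<open>d\<close> parses and
  would produce a factor with more than \<open>d\<close> parses.\<close>

lemma proper_prefix_if_no_prefix_in:
  assumes w: "w \<in> F" and free: "no_prefix_in X w"
  shows "w \<in> P"
proof (cases "w = []")
  case True then show ?thesis using Nil_proper_prefix by simp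
next
  case False
  obtain w0 where w0: "w0 \<in> F" "parse_count X w0 = d" using degree_attained by blast
  obtain t where y: "w @ t @ w0 \<in> F" using recurrent[OF w w0(1)] by blast
  have "d \<le> parse_count X (t @ w0)" using parse_count_mono_prepend[of X w0 t] w0(2) by simp
  moreover have "parse_count X (w @ t @ w0) \<le> d" by (rule parse_count_le_degree[OF y])
  ultimately have "\<not> no_prefix_in X (w @ t @ w0)"
    using parse_count_prepend_strict[OF False, of X "t @ w0"] by linarith
  then obtain p where p: "prefix p (w @ t @ w0)" "p \<in> X" unfolding no_prefix_in_def by blast
  with free have "\<not> prefix p w" unfolding no_prefix_in_def by blast
  with p(1) obtain us where us: "p = w @ us" by (auto simp: prefix_append)
  with free p(2) have "us \<noteq> []" unfolding no_prefix_in_def by auto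
  with us have "strict_prefix w p" by (auto simp: strict_prefix_def)
  with p(2) show ?thesis unfolding proper_prefixes_def by blast
qed

lemma proper_suffix_if_no_suffix_in:
  assumes w: "w \<in> F" and free: "no_suffix_in X w"
  shows "w \<in> S"
proof (cases "w = []")
  case True then show ?thesis using Nil_proper_suffix by simp
next
  case False
  obtain w0 where w0: "w0 \<in> F" "parse_count X w0 = d" using degree_attained by blast
  obtain t where y: "w0 @ t @ w \<in> F" using recurrent[OF w0(1) w] by blast
  have "d \<le> parse_count X (w0 @ t)" using parse_count_mono_append[OF bifix, of w0 t] w0(2) by simp
  moreover have "parse_count X ((w0 @ t) @ w) \<le> d" using parse_count_le_degree[OF y] by simp
  ultimately have "\<not> no_suffix_in X ((w0 @ t) @ w)"
    using parse_count_append_strict[OF bifix False, of "w0 @ t"] by linarith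
  then obtain s where s: "suffix s ((w0 @ t) @ w)" "s \<in> X" unfolding no_suffix_in_def by blast
  with free have "\<not> suffix s w" unfolding no_suffix_in_def by blast
  with s(1) obtain us where us: "s = us @ w" by (auto simp: suffix_append)
  with free s(2) have "us \<noteq> []" unfolding no_suffix_in_def by auto
  with us have "strict_suffix w s" by (auto simp: strict_suffix_def suffix_def)
  with s(2) show ?thesis unfolding proper_suffixes_def by blast
qed

lemma proper_prefixes_iff: "u \<in> P \<longleftrightarrow> u \<in> F \<and> no_prefix_in X u"
proof
  assume "u \<in> P"
  then obtain x0 where x0: "x0 \<in> X" "strict_prefix u x0" unfolding proper_prefixes_def by blast
  then have "u \<in> F"
    using code_in_factors factors_prefix unfolding strict_prefix_def prefix_def by blast
  moreover have "no_prefix_in X u" unfolding no_prefix_in_def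
  proof (intro allI impI)
    fix p assume "prefix p u"
    with x0(2) have "strict_prefix p x0" by (meson prefix_order.le_less_trans)
    with bifix x0(1) show "p \<notin> X" unfolding bifix_code_def by blast
  qed
  ultimately show "u \<in> F \<and> no_prefix_in X u" ..
qed (use proper_prefix_if_no_prefix_in in blast)

lemma proper_suffixes_iff: "u \<in> S \<longleftrightarrow> u \<in> F \<and> no_suffix_in X u"
proof
  assume "u \<in> S"
  then obtain x0 where x0: "x0 \<in> X" "strict_suffix u x0" unfolding proper_suffixes_def by blast
  then have "u \<in> F"
    using code_in_factors factors_suffix unfolding strict_suffix_def suffix_def by blast
  moreover have "no_suffix_in X u" unfolding no_suffix_in_def
  proof (intro allI impI)
    fix s assume "suffix s u"
    with x0(2) have "strict_suffix s x0" by (meson suffix_order.le_less_trans)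
    with bifix x0(1) show "s \<notin> X" unfolding bifix_code_def by blast
  qed
  ultimately show "u \<in> F \<and> no_suffix_in X u" ..
qed (use proper_suffix_if_no_suffix_in in blast)

lemma proper_prefix_not_in_code: "u \<in> P \<Longrightarrow> u \<notin> X"
  using proper_prefixes_iff unfolding no_prefix_in_def by blast

definition max_length :: nat where "max_length = Max (length ` X)"

lemma length_code_le: "u \<in> X \<Longrightarrow> length u \<le> max_length"
  unfolding max_length_def using finite_code by simp

lemma length_proper_prefix: "u \<in> P \<Longrightarrow> length u < max_length"
  unfolding proper_prefixes_def using length_code_le prefix_length_less by fastforce

lemma length_proper_suffix: "u \<in> S \<Longrightarrow> length u < max_length"
  unfolding proper_suffixes_def using length_code_le suffix_length_less by fastforce

lemma finite_proper_prefixes: "finite P"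
proof -
  have "P \<subseteq> (\<Union>x0\<in>X. set (prefixes x0))"
    unfolding proper_prefixes_def by (auto simp: strict_prefix_def)
  then show ?thesis using finite_code by (simp add: finite_subset)
qed

lemma finite_proper_suffixes: "finite S"
proof -
  have "S \<subseteq> (\<Union>x0\<in>X. set (suffixes x0))"
    unfolding proper_suffixes_def by (auto simp: strict_suffix_def)
  then show ?thesis using finite_code by (simp add: finite_subset)
qed

text \<open>Every factor at least as long as the longest code word has exactly \<open>d\<close> parses:
  extended on the left to a factor with \<open>d\<close> parses, it gains no new free suffix, since free
  suffixes of factors are proper prefixes and hence shorter than it.\<close>

lemma parse_count_long:
  assumes v: "v \<in> F" "max_length \<le> length v"
  shows "parse_count X v = d"
proof -
  obtain w0 where w0: "w0 \<in> F" "parse_count X w0 = d" using degree_attained by blast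
  obtain t where y: "w0 @ t @ v \<in> F" using recurrent[OF w0(1) v(1)] by blast
  have "d \<le> parse_count X (w0 @ t @ v)"
    using parse_count_mono_append[OF bifix, of w0 "t @ v"] w0(2) by simp
  with parse_count_le_degree[OF y] have d: "parse_count X (w0 @ t @ v) = d" by simp
  have "free_suffixes X (w0 @ t @ v) \<subseteq> free_suffixes X v"
  proof
    fix u assume u: "u \<in> free_suffixes X (w0 @ t @ v)"
    then obtain z where "w0 @ t @ v = z @ u" by (auto simp: free_suffixes_def suffix_def)
    with y have "u \<in> F" using factors_suffix by metis
    with u have "length u < length v"
      using proper_prefixes_iff length_proper_prefix v(2) unfolding free_suffixes_def by fastforce
    moreover have "suffix v (w0 @ t @ v)" by (simp add: suffix_appendI)
    ultimately show "u \<in> free_suffixes X v"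
      using u suffix_length_suffix[of u "w0 @ t @ v" v] unfolding free_suffixes_def by simp
  qed
  moreover have "free_suffixes X v \<subseteq> free_suffixes X (w0 @ t @ v)"
    by (auto simp: free_suffixes_def intro: suffix_appendI)
  ultimately show ?thesis using d unfolding parse_count_def by simp
qed

text \<open>The lengths of the right special proper prefixes.  There are exactly \<open>d\<close> of them: the
  free suffixes of the right special word \<open>special m\<close> are the right special proper prefixes
  of length at most \<open>m\<close>.\<close>

definition special_levels :: "nat set" where
  "special_levels = {j. special j \<in> P}"

lemma special_levels_less: "j \<in> special_levels \<Longrightarrow> j < max_length"
  using length_proper_prefix[of "special j"] unfolding special_levels_def length_special by simp

lemma finite_special_levels: "finite special_levels"
  using special_levels_less finite_nat_set_iff_bounded by blast

lemma parse_count_special: "parse_count X (special m) = card {j \<in> special_levels. j \<le> m}"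
proof -
  have "free_suffixes X (special m) = special ` {j \<in> special_levels. j \<le> m}"
  proof (rule set_eqI, rule iffI)
    fix u assume u: "u \<in> free_suffixes X (special m)"
    then have suf: "suffix u (special m)" and free: "no_prefix_in X u"
      unfolding free_suffixes_def by auto
    from suf obtain zs where "special m = zs @ u" unfolding suffix_def by blast
    then have "u \<in> F" using special_in_factors[of m] factors_suffix by metis
    with free have "u \<in> P" using proper_prefixes_iff by blast
    moreover have "length u \<le> m" using suffix_length_le[OF suf] length_special by simp
    moreover have "u = special (length u)" using suffix_special[OF suf] .
    ultimately show "u \<in> special ` {j \<in> special_levels. j \<le> m}"
      unfolding special_levels_def by (intro image_eqI[where x = "length u"]) auto
  next
    fix u assume "u \<in> special ` {j \<in> special_levels. j \<le> m}"
    then obtain j where "u = special j" "j \<le> m" "special j \<in> P"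
      unfolding special_levels_def by auto
    then show "u \<in> free_suffixes X (special m)"
      using special_suffix proper_prefixes_iff unfolding free_suffixes_def by blast
  qed
  then show ?thesis
    unfolding parse_count_def using inj_special by (simp add: card_image inj_on_subset)
qed

lemma card_special_levels: "card special_levels = d"
proof -
  have "{j \<in> special_levels. j \<le> max_length} = special_levels"
    using special_levels_less by (auto simp: less_imp_le)
  then show ?thesis
    using parse_count_special[of max_length] parse_count_long[OF special_in_factors]
    by (simp add: length_special)
qed

end

section \<open>The length formula\<close>

context bifix_code_in_sturmian
begin

text \<open>Counting code words through the prefix tree: the nonempty words of \<open>X \<union> P\<close> are
  exactly the one-letter extensions \<open>p a\<close> of proper prefixes \<open>p\<close>.\<close>

lemma code_and_proper_prefixes:
  "X \<union> P = insert [] ((\<lambda>(p, a). p @ [a]) ` (SIGMA p:P. extensions p))"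
proof (rule set_eqI, rule iffI)
  fix v assume v: "v \<in> X \<union> P"
  show "v \<in> insert [] ((\<lambda>(p, a). p @ [a]) ` (SIGMA p:P. extensions p))"
  proof (cases v rule: rev_cases)
    case (snoc p a)
    have "v \<in> F" using v code_in_factors proper_prefixes_iff by auto
    with snoc have "a \<in> extensions p" unfolding extensions_def by simp
    moreover have "p \<in> P"
    proof -
      obtain x0 where "x0 \<in> X" "prefix v x0"
        using v unfolding proper_prefixes_def strict_prefix_def by blast
      moreover have "strict_prefix p v" using snoc by (auto simp: strict_prefix_def)
      ultimately show ?thesis unfolding proper_prefixes_def
        using prefix_order.less_le_trans by blast
    qed
    ultimately show ?thesis using snoc by force
  qed simp
next
  fix v assume "v \<in> insert [] ((\<lambda>(p, a). p @ [a]) ` (SIGMA p:P. extensions p))"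
  then consider "v = []" | p a where "v = p @ [a]" "p \<in> P" "a \<in> extensions p" by auto
  then show "v \<in> X \<union> P"
  proof cases
    case 1 then show ?thesis using Nil_proper_prefix by simp
  next
    case 2
    then have "v \<in> F" unfolding extensions_def by simp
    show ?thesis
    proof (cases "no_prefix_in X v")
      case True
      with \<open>v \<in> F\<close> show ?thesis using proper_prefixes_iff by blast
    next
      case False
      then obtain q where q: "prefix q v" "q \<in> X" unfolding no_prefix_in_def by blast
      have "no_prefix_in X p" using 2 proper_prefixes_iff by blast
      with q 2 have "q = v" unfolding no_prefix_in_def by auto
      with q show ?thesis by simp
    qed
  qed
qed

lemma right_special_proper_prefixes:
  "{p \<in> P. p = special (length p)} = special ` special_levels"
  unfolding special_levels_def by (auto simp: length_special)

text \<open>Each proper prefix \<open>p\<close> has one extension in \<open>X \<union> P\<close>, or \<open>card A\<close> of them when it is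
  right special; weighting by length gives the total length of the code.\<close>

lemma sum_length_code:
  "int (\<Sum>u\<in>X. length u) = int (card P) + (int (card A) - 1) * (\<Sum>j\<in>special_levels. int j + 1)"
proof -
  define E where "E = (SIGMA p:P. extensions p)"
  have finite_E: "finite E"
    unfolding E_def using finite_proper_prefixes finite_extensions by blast
  have inj: "inj_on (\<lambda>(p, a). p @ [a]) E" by (auto intro!: inj_onI)
  let ?special_indicator = "\<lambda>p. if p = special (length p) then int (length p) + 1 else 0"
  have "(\<Sum>u\<in>X. int (length u)) + (\<Sum>p\<in>P. int (length p)) = (\<Sum>v\<in>X \<union> P. int (length v))"
    using finite_code finite_proper_prefixes proper_prefix_not_in_code
    by (intro sum.union_disjoint[symmetric]) auto
  also have "\<dots> = (\<Sum>v\<in>(\<lambda>(p, a). p @ [a]) ` E. int (length v))"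
    unfolding code_and_proper_prefixes E_def[symmetric] using finite_E by (simp add: sum.insert_if)
  also have "\<dots> = (\<Sum>(p, a)\<in>E. int (length p) + 1)"
    unfolding sum.reindex[OF inj] by (simp add: case_prod_unfold add.commute)
  also have "\<dots> = (\<Sum>p\<in>P. int (card (extensions p)) * (int (length p) + 1))"
    unfolding E_def
    by (subst sum.Sigma[symmetric]) (auto simp: finite_proper_prefixes finite_extensions)
  also have "\<dots> = (\<Sum>p\<in>P. (int (length p) + 1) + (int (card A) - 1) * ?special_indicator p)"
  proof (rule sum.cong[OF refl])
    fix p assume "p \<in> P"
    then have "card (extensions p) = (if p = special (length p) then card A else 1)"
      using card_extensions proper_prefixes_iff by blast
    then show "int (card (extensions p)) * (int (length p) + 1)
        = int (length p) + 1 + (int (card A) - 1) * ?special_indicator p"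
      by (simp add: algebra_simps)
  qed
  also have "\<dots> = (\<Sum>p\<in>P. int (length p)) + int (card P)
      + (int (card A) - 1) * (\<Sum>p\<in>P. ?special_indicator p)"
    by (simp add: sum.distrib sum_distrib_left)
  also have "(\<Sum>p\<in>P. ?special_indicator p) = (\<Sum>p\<in>{p \<in> P. p = special (length p)}. int (length p) + 1)"
    by (rule sum.inter_filter[OF finite_proper_prefixes, symmetric])
  also have "\<dots> = (\<Sum>j\<in>special_levels. int j + 1)"
    unfolding right_special_proper_prefixes
    by (simp add: sum.reindex inj_on_subset[OF inj_special] length_special)
  finally show ?thesis by simp
qed

text \<open>Counting proper suffixes through the parse counts: summing the number of parses over
  all factors of length \<open>n + 1\<close>, each factor \<open>w\<close> of length \<open>n\<close> contributes once per
  extension, plus one for every extension \<open>w a\<close> that is a proper suffix.\<close>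

definition parse_excess :: "nat \<Rightarrow> int" where
  "parse_excess n = (\<Sum>v\<in>factors_of_length n. int (parse_count X v) - int d)"

lemma proper_suffixes_of_length_Suc:
  "int (card {s \<in> S. length s = Suc n}) = parse_excess (Suc n) - parse_excess n
     - (int (card A) - 1) * (int (parse_count X (special n)) - int d)"
proof -
  define g where "g v = int (parse_count X v) - int d" for v
  have "{s \<in> S. length s = Suc n} = {v \<in> factors_of_length (Suc n). no_suffix_in X v}"
    using proper_suffixes_iff unfolding factors_of_length_def by auto
  then have "int (card {s \<in> S. length s = Suc n})
      = (\<Sum>v\<in>factors_of_length (Suc n). if no_suffix_in X v then 1 else 0)"
    using sum.inter_filter[OF finite_factors_of_length, of "\<lambda>_. 1::int"] by simp
  also have "\<dots> = (\<Sum>w\<in>factors_of_length n. \<Sum>a\<in>extensions w. g (w @ [a]) - g w)"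
    unfolding sum_factors_of_length_Suc
    by (intro sum.cong refl) (simp add: g_def parse_count_snoc[OF bifix])
  also have "\<dots> = parse_excess (Suc n) - (\<Sum>w\<in>factors_of_length n. int (card (extensions w)) * g w)"
    unfolding parse_excess_def g_def[symmetric] sum_factors_of_length_Suc by (simp add: sum_subtractf)
  also have "(\<Sum>w\<in>factors_of_length n. int (card (extensions w)) * g w)
      = (\<Sum>w\<in>factors_of_length n. g w + (if w = special n then (int (card A) - 1) * g w else 0))"
  proof (rule sum.cong[OF refl])
    fix w assume "w \<in> factors_of_length n"
    then have "card (extensions w) = (if w = special n then card A else 1)"
      using card_extensions unfolding factors_of_length_def by auto
    then show "int (card (extensions w)) * g w
        = g w + (if w = special n then (int (card A) - 1) * g w else 0)"
      by (simp add: algebra_simps)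
  qed
  also have "\<dots> = parse_excess n + (int (card A) - 1) * g (special n)"
    using special_in_factors[of n] length_special[of n] finite_factors_of_length[of n]
    unfolding parse_excess_def g_def[symmetric] by (simp add: sum.distrib factors_of_length_def)
  finally show ?thesis unfolding g_def by simp
qed

lemma parse_excess_0: "parse_excess 0 = 1 - int d"
proof -
  have "factors_of_length 0 = {[]}" unfolding factors_of_length_def using factors_Nil by auto
  moreover have "free_suffixes X [] = {[]}"
    using bifix_code_Nil[OF bifix] unfolding free_suffixes_def no_prefix_in_def by auto
  ultimately show ?thesis unfolding parse_excess_def parse_count_def by simp
qed

lemma parse_excess_max_length: "parse_excess max_length = 0"
  unfolding parse_excess_def factors_of_length_def using parse_count_long by (intro sum.neutral) auto

lemma degree_split_special:
  "d = parse_count X (special n) + card {j \<in> special_levels. n < j}"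
proof -
  have "special_levels = {j \<in> special_levels. j \<le> n} \<union> {j \<in> special_levels. n < j}" by auto
  also have "card \<dots> = card {j \<in> special_levels. j \<le> n} + card {j \<in> special_levels. n < j}"
    by (rule card_Un_disjoint) (use finite_special_levels in auto)
  finally show ?thesis using card_special_levels parse_count_special by simp
qed

lemma card_proper_suffixes:
  "int (card S) = int d + (int (card A) - 1) * (\<Sum>j\<in>special_levels. int j)"
proof -
  let ?L = max_length and ?c = "int (card A) - 1"
  have "card S = (\<Sum>n<Suc ?L. card {s \<in> S. length s = n})"
    using finite_proper_suffixes length_proper_suffix less_Suc_eq
    by (intro card_by_length) auto
  also have "\<dots> = card {s \<in> S. length s = 0} + (\<Sum>n<?L. card {s \<in> S. length s = Suc n})"
    by (rule sum.lessThan_Suc_shift)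
  also have "{s \<in> S. length s = 0} = {[]}" using Nil_proper_suffix by auto
  finally have "int (card S) = 1 + (\<Sum>n<?L. int (card {s \<in> S. length s = Suc n}))"
    by (simp add: of_nat_sum)
  also have "\<dots> = 1 + (\<Sum>n<?L. (parse_excess (Suc n) - parse_excess n)
      + ?c * (int d - int (parse_count X (special n))))"
    unfolding proper_suffixes_of_length_Suc by (simp add: algebra_simps)
  also have "\<dots> = 1 + (\<Sum>n<?L. parse_excess (Suc n) - parse_excess n)
      + ?c * (\<Sum>n<?L. int d - int (parse_count X (special n)))"
    by (simp add: sum.distrib sum_distrib_left)
  also have "(\<Sum>n<?L. parse_excess (Suc n) - parse_excess n) = int d - 1"
    using sum_lessThan_telescope[of parse_excess ?L] parse_excess_0 parse_excess_max_length by simp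
  also have "(\<Sum>n<?L. int d - int (parse_count X (special n))) = (\<Sum>j\<in>special_levels. int j)"
  proof -
    have "(\<Sum>n<?L. int d - int (parse_count X (special n)))
        = (\<Sum>n<?L. int (card {j \<in> special_levels. n < j}))"
    proof (rule sum.cong[OF refl])
      fix n
      show "int d - int (parse_count X (special n)) = int (card {j \<in> special_levels. n < j})"
        using arg_cong[OF degree_split_special[of n], of int] by simp
    qed
    also have "\<dots> = int (\<Sum>n<?L. card {j \<in> special_levels. n < j})"
      by (rule of_nat_sum[symmetric])
    also have "\<dots> = int (\<Sum>j\<in>special_levels. j)"
      using finite_special_levels special_levels_less by (simp add: sum_card_greater)
    finally show ?thesis by (simp add: of_nat_sum)
  qed
  finally show ?thesis by simp
qed

theorem sum_length_code_formula:
  "int (\<Sum>u\<in>X. length u) = int (card P) + int (card S) + (int (card A) - 2) * int d"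
proof -
  have "(\<Sum>j\<in>special_levels. int j + 1) = (\<Sum>j\<in>special_levels. int j) + int d"
    using card_special_levels by (simp add: sum.distrib)
  with sum_length_code card_proper_suffixes show ?thesis by (simp add: algebra_simps)
qed

end

theorem mainTheorem19:
  fixes A :: "'a set" and F X :: "'a list set" and k d :: nat
  assumes "finite A" and "card A = k"
    and "sturmian_set A F"
    and "finite X" and "F_maximal_bifix F X"
    and "has_F_degree F X d"
  shows "int (\<Sum>x\<in>X. length x) =
    int (card (proper_prefixes X)) + int (card (proper_suffixes X)) + (int k - 2) * int d"
proof -
  obtain x where episturmian: "strict_episturmian A x" and F: "F = factors x"
    using assms(3) unfolding sturmian_set_def by blast
  have bifix: "bifix_code X" and code_in_factors: "X \<subseteq> F"
    using assms(5) unfolding F_maximal_bifix_def by auto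
  have "X \<noteq> {}"
  proof
    assume "X = {}"
    moreover have "[x 0] \<in> F" unfolding F factors_iff_occurs occurs_at_def by auto
    moreover have "bifix_code {[x 0]}" unfolding bifix_code_def by auto
    ultimately show False using assms(5) unfolding F_maximal_bifix_def by blast
  qed
  then interpret bifix_code_in_sturmian A x X d
    using assms episturmian bifix code_in_factors F by unfold_locales auto
  show ?thesis using sum_length_code_formula assms(2) by simp
qed

end
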